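(* Let $\varepsilon>0$, let $\rho,\gamma$ be density matrices on a finite-dimensional system $A$ and $\rho',\gamma'$ density matrices on a finite-dimensional system $A'$. Then $$D_{\min}^\varepsilon\left(\rho\otimes\rho'\,\big\|\,\gamma\otimes\gamma'\right)\leq D_{\min}^\varepsilon(\rho\|\gamma)+D_{\max}(\rho'\|\gamma').$$
   Context: For density matrices $\rho,\gamma$ on a system $A$, the hypothesis testing divergence is $D_{\min}^\varepsilon(\rho\|\gamma)\coloneqq-\log\min\{\mathrm{Tr}[\gamma\Lambda]\,:\,0\le\Lambda\le I^A,\ \mathrm{Tr}[\Lambda\rho]\ge1-\varepsilon\}$, and the max relative entropy is $D_{\max}(\rho\|\gamma)\coloneqq\log\min\{t\ge0: t\gamma\ge\rho\}$ (equal to $+\infty$ if no such $t$ exists). Logarithms are base 2. *)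

theory Defs
  imports "HOL-Analysis.Analysis"
begin

text \<open>Finite-dimensional quantum systems are modelled by finite index types;
  operators on a system with index type 'n are complex matrices of type
  complex^'n^'n.\<close>

definition mtrace :: "complex^'n^'n \<Rightarrow> complex" where
  "mtrace M = (\<Sum>i\<in>UNIV. M $ i $ i)"

definition adjoint_mat :: "complex^'n^'m \<Rightarrow> complex^'m^'n" where
  "adjoint_mat M = (\<chi> i j. cnj (M $ j $ i))"

definition psd :: "complex^'n^'n \<Rightarrow> bool" where
  "psd M \<longleftrightarrow> adjoint_mat M = M \<and>
     (\<forall>v::complex^'n. (\<Sum>i\<in>UNIV. cnj (v $ i) * (M *v v) $ i) \<in> \<real> \<and>
                      0 \<le> Re (\<Sum>i\<in>UNIV. cnj (v $ i) * (M *v v) $ i))"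

definition loewner_le :: "complex^'n^'n \<Rightarrow> complex^'n^'n \<Rightarrow> bool" where
  "loewner_le A B \<longleftrightarrow> psd (B - A)"

definition density_op :: "complex^'n^'n \<Rightarrow> bool" where
  "density_op \<rho> \<longleftrightarrow> psd \<rho> \<and> mtrace \<rho> = 1"

definition kron :: "complex^'a^'a \<Rightarrow> complex^'b^'b \<Rightarrow> complex^('a \<times> 'b)^('a \<times> 'b)" where
  "kron A B = (\<chi> p q. A $ fst p $ fst q * B $ snd p $ snd q)"

definition log2e :: "real \<Rightarrow> ereal" where
  "log2e x = (if x \<le> 0 then -\<infinity> else ereal (log 2 x))"

text \<open>Hypothesis testing divergence: D_min^eps(rho||gamma) = - log min Tr[gamma Lambda]
  over 0 \<le> Lambda \<le> I with Tr[Lambda rho] \<ge> 1 - eps (the minimum exists by compactness,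
  so it equals the infimum).\<close>
definition D_min :: "real \<Rightarrow> complex^'n^'n \<Rightarrow> complex^'n^'n \<Rightarrow> ereal" where
  "D_min \<epsilon> \<rho> \<gamma> = - log2e (Inf {Re (mtrace (\<gamma> ** \<Lambda>)) | \<Lambda>.
      psd \<Lambda> \<and> loewner_le \<Lambda> (mat 1) \<and> Re (mtrace (\<Lambda> ** \<rho>)) \<ge> 1 - \<epsilon>})"

definition D_max :: "complex^'n^'n \<Rightarrow> complex^'n^'n \<Rightarrow> ereal" where
  "D_max \<rho> \<gamma> = (if \<exists>t\<ge>0. loewner_le \<rho> (t *\<^sub>R \<gamma>)
      then log2e (Inf {t. t \<ge> 0 \<and> loewner_le \<rho> (t *\<^sub>R \<gamma>)})
      else \<infinity>)"

end

theory Submission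
  imports Defs
begin

(* Let t be admissible in D_max, i.e. rho' <= t gamma'. Any test Lambda for rho (x) rho'
   against gamma (x) gamma' contracts to the test Lambda_A = Tr_A'[Lambda (I (x) rho')]
   for rho against gamma: it is again between 0 and I, and Tr[Lambda_A rho] = Tr[Lambda (rho (x) rho')].
   Its type-II error is Tr[gamma Lambda_A] = Tr[(gamma (x) rho') Lambda] <= t Tr[(gamma (x) gamma') Lambda],
   because gamma (x) (t gamma' - rho') is positive. So the minimal type-II errors satisfy
   beta(rho, gamma) <= t beta(rho (x) rho', gamma (x) gamma'), and taking -log gives the claim.
   All positivity statements reduce to writing a positive semidefinite matrix as a sum of
   rank-one matrices u u^*, which is obtained by repeatedly splitting off a Cholesky pivot. *)

section \<open>Sesquilinear forms and positive semidefinite matrices\<close>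

definition sesq :: "complex^'n^'n \<Rightarrow> complex^'n \<Rightarrow> complex^'n \<Rightarrow> complex" where
  "sesq M u v = (\<Sum>i\<in>UNIV. \<Sum>j\<in>UNIV. cnj (u$i) * M$i$j * v$j)"

definition outer :: "complex^'n \<Rightarrow> complex^'n \<Rightarrow> complex^'n^'n" where
  "outer u w = (\<chi> i j. u$i * cnj (w$j))"

lemma quadratic_form_eq_sesq: "(\<Sum>i\<in>UNIV. cnj (v$i) * (M *v v)$i) = sesq M v v"
  by (simp add: sesq_def matrix_vector_mult_def sum_distrib_left mult.assoc)

lemma cnj_sesq: "cnj (sesq M u v) = sesq (adjoint_mat M) v u"
  unfolding sesq_def adjoint_mat_def by (subst sum.swap) (simp add: mult_ac)

lemma sesq_add_left: "sesq M (u + u') v = sesq M u v + sesq M u' v"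
  by (simp add: sesq_def algebra_simps sum.distrib)

lemma sesq_add_right: "sesq M u (v + v') = sesq M u v + sesq M u v'"
  by (simp add: sesq_def algebra_simps sum.distrib)

lemma sesq_axis_left: "sesq M (axis k c) v = cnj c * (M *v v)$k"
proof -
  have "cnj (axis k c $ i) * (\<Sum>j\<in>UNIV. M$i$j * v$j) = (if i = k then cnj c * (M *v v)$k else 0)" for i
    by (simp add: axis_def matrix_vector_mult_def)
  then show ?thesis
    by (simp add: sesq_def sum_distrib_left mult.assoc)
qed

lemma matrix_vector_mult_axis_nth: "(M *v axis j b)$i = M$i$j * b"
  by (simp add: matrix_vector_mult_def axis_def if_distrib cong: if_cong)

lemma sesq_axis: "sesq M (axis i a) (axis j b) = cnj a * M$i$j * b"
  by (simp add: sesq_axis_left matrix_vector_mult_axis_nth mult.assoc)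

lemma sesq_diff: "sesq (M - N) u v = sesq M u v - sesq N u v"
  by (simp add: sesq_def algebra_simps sum_subtractf)

lemma sesq_sum: "sesq (\<Sum>k\<in>S. M k) u v = (\<Sum>k\<in>S. sesq (M k) u v)"
  by (simp add: sesq_def sum_distrib_left sum_distrib_right mult.assoc
      sum.swap[where B = S])

lemma hermitian_if_sesq_real:
  assumes real: "\<And>v. sesq M v v \<in> \<real>"
  shows "adjoint_mat M = M"
proof -
  define N where "N = M - adjoint_mat M"
  have N0: "sesq N v v = 0" for v
    using real[of v] unfolding N_def sesq_diff cnj_sesq[symmetric] by (simp add: Reals_cnj_iff)
  have "N$i$j = 0" for i j
  proof -
    have expand: "sesq N (axis i 1 + axis j c) (axis i 1 + axis j c) = c * N$i$j + cnj c * N$j$i" for c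
      using N0[of "axis i 1"] N0[of "axis j c"]
      by (simp add: sesq_add_left sesq_add_right sesq_axis)
    from expand[of 1] have sum0: "N$i$j + N$j$i = 0" by (simp add: N0)
    from expand[of \<i>] have "\<i> * (N$i$j - N$j$i) = 0" by (simp add: N0 right_diff_distrib)
    then have "N$i$j - N$j$i = 0" by simp
    with sum0 show ?thesis by (simp add: eq_neg_iff_add_eq_0)
  qed
  then have "N = 0" by (simp add: vec_eq_iff)
  then show ?thesis unfolding N_def by (metis eq_iff_diff_eq_0)
qed

text \<open>The order on complex numbers is the partial order of HOL-Library.Complex_Order:
  \<open>0 \<le> z\<close> means that \<open>z\<close> is a nonnegative real.\<close>

lemma psd_iff_sesq_nonneg: "psd M \<longleftrightarrow> (\<forall>v. 0 \<le> sesq M v v)"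
proof
  assume "\<forall>v. 0 \<le> sesq M v v"
  then have "sesq M v v \<in> \<real> \<and> 0 \<le> Re (sesq M v v)" for v
    by (simp add: nonnegative_complex_is_real less_eq_complex_def)
  then show "psd M"
    unfolding psd_def quadratic_form_eq_sesq using hermitian_if_sesq_real by blast
qed (simp add: psd_def quadratic_form_eq_sesq complex_is_Real_iff less_eq_complex_def)

lemma psd_adjoint: "psd M \<Longrightarrow> adjoint_mat M = M"
  by (simp add: psd_def)

lemma psd_sesq_nonneg: "psd M \<Longrightarrow> 0 \<le> sesq M v v"
  by (simp add: psd_iff_sesq_nonneg)

lemma psd_diag_nonneg: "psd M \<Longrightarrow> 0 \<le> M$k$k"
  using psd_sesq_nonneg[of M "axis k 1"] by (simp add: sesq_axis)

lemma psd_cnj_entry: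
  assumes "psd A" shows "cnj (A$i$j) = A$j$i"
proof -
  have "adjoint_mat A $ j $ i = A $ j $ i" using psd_adjoint[OF assms] by simp
  then show ?thesis by (simp add: adjoint_mat_def)
qed

lemma psd_diag_real:
  assumes "psd A" shows "A$k$k = of_real (Re (A$k$k))"
  using of_real_Re[OF nonnegative_complex_is_real[OF psd_diag_nonneg[OF assms]]] by simp

lemma psd_trace_nonneg: "psd M \<Longrightarrow> 0 \<le> mtrace M"
  by (simp add: mtrace_def sum_nonneg psd_diag_nonneg)

lemma psd_sum: "(\<And>k. k \<in> S \<Longrightarrow> psd (M k)) \<Longrightarrow> psd (\<Sum>k\<in>S. M k)"
  by (simp add: psd_iff_sesq_nonneg sesq_sum sum_nonneg)

lemma cnj_mult_self: "cnj z * z = of_real ((cmod z)\<^sup>2)"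
  by (metis complex_norm_square mult.commute of_real_power)

lemma cnj_mult_self_nonneg: "0 \<le> cnj z * z"
  by (simp add: cnj_mult_self less_eq_complex_def)

lemma sesq_outer: "sesq (outer w w) v v = cnj (\<Sum>j\<in>UNIV. cnj (w$j) * v$j) * (\<Sum>j\<in>UNIV. cnj (w$j) * v$j)"
proof -
  have "cnj (\<Sum>j\<in>UNIV. cnj (w$j) * v$j) = (\<Sum>i\<in>UNIV. cnj (v$i) * w$i)"
    by (simp add: mult.commute)
  then show ?thesis by (simp add: sesq_def outer_def sum_product mult.assoc)
qed

lemma psd_outer: "psd (outer w w)"
  unfolding psd_iff_sesq_nonneg sesq_outer using cnj_mult_self_nonneg by blast

lemma psd_mat1: "psd (mat 1)"
  unfolding psd_iff_sesq_nonneg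
proof
  fix v :: "complex^'n"
  have "sesq (mat 1) v v = (\<Sum>i\<in>UNIV. cnj (v$i) * v$i)"
    by (simp add: sesq_def mat_def if_distrib if_distribR cong: if_cong)
  then show "0 \<le> sesq (mat 1) v v"
    by (simp add: sum_nonneg cnj_mult_self_nonneg)
qed

lemma psd_zero: "psd 0"
  by (simp add: psd_iff_sesq_nonneg sesq_def)

lemma trace_mult_commute: "mtrace (A ** B) = mtrace (B ** A)"
  unfolding mtrace_def matrix_matrix_mult_def by (simp add: mult.commute) (rule sum.swap)

lemma trace_mult_outer: "mtrace (M ** outer v v) = sesq M v v"
  by (simp add: mtrace_def matrix_matrix_mult_def outer_def sesq_def sum_distrib_left mult_ac)

lemma trace_sum_mult: "mtrace ((\<Sum>k\<in>S. M k) ** B) = (\<Sum>k\<in>S. mtrace (M k ** B))"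
  by (simp add: mtrace_def matrix_matrix_mult_def sum_distrib_right sum.swap[where B = S])

lemma trace_diff_mult: "mtrace ((A - B) ** C) = mtrace (A ** C) - mtrace (B ** C)"
  by (simp add: mtrace_def matrix_matrix_mult_def left_diff_distrib sum_subtractf)

lemma trace_scaleR_mult: "mtrace ((t *\<^sub>R A) ** B) = t *\<^sub>R mtrace (A ** B)"
  by (simp add: mtrace_def scalar_matrix_assoc[symmetric] scaleR_sum_right)

lemma real_quadratic_nonneg_bound:
  fixes q b d :: real
  assumes nonneg: "\<And>s. 0 \<le> q - 2 * s * b + s\<^sup>2 * b * d" and "0 \<le> d"
  shows "b \<le> d * q"
proof (cases "d = 0")
  case True
  have "b = 0"
  proof (rule ccontr)
    assume "b \<noteq> 0"
    then have "2 * ((q + 1) / (2 * b)) * b = q + 1" by simp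
    with nonneg[of "(q + 1) / (2 * b)"] True show False by simp
  qed
  with True show ?thesis by simp
next
  case False
  with \<open>0 \<le> d\<close> have "0 < d" by simp
  then have "(1 / d)\<^sup>2 * b * d = b / d" by (simp add: power2_eq_square)
  with nonneg[of "1 / d"] have "b / d \<le> q" by simp
  with \<open>0 < d\<close> show ?thesis by (simp add: pos_divide_le_eq mult.commute)
qed

lemma psd_cauchy_schwarz:
  assumes "psd A"
  shows "(cmod ((A *v v)$k))\<^sup>2 \<le> Re (A$k$k) * Re (sesq A v v)"
proof (rule real_quadratic_nonneg_bound)
  define z where "z = (A *v v)$k"
  have "sesq A v (axis k c) = c * cnj z" for c
    using cnj_sesq[of A "axis k c" v] psd_adjoint[OF assms] by (simp add: sesq_axis_left z_def)
  then have expand: "sesq A (v + axis k c) (v + axis k c)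
      = sesq A v v + c * cnj z + cnj c * z + cnj c * A$k$k * c" for c
    by (simp add: sesq_add_left sesq_add_right sesq_axis_left matrix_vector_mult_axis_nth z_def)
  fix s :: real
  have shifted: "sesq A (v + axis k (- of_real s * z)) (v + axis k (- of_real s * z))
      = sesq A v v - of_real (2 * s * (cmod z)\<^sup>2 - s\<^sup>2 * (cmod z)\<^sup>2 * Re (A$k$k))"
    unfolding expand cmod_power2
    by (subst psd_diag_real[OF assms]) (simp add: complex_eq_iff algebra_simps power2_eq_square)
  have "0 \<le> Re (sesq A v v - of_real (2 * s * (cmod z)\<^sup>2 - s\<^sup>2 * (cmod z)\<^sup>2 * Re (A$k$k)))"
    using psd_sesq_nonneg[OF assms] unfolding shifted[symmetric] by (simp add: less_eq_complex_def)
  then show "0 \<le> Re (sesq A v v) - 2 * s * (cmod z)\<^sup>2 + s\<^sup>2 * (cmod z)\<^sup>2 * Re (A$k$k)"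
    by simp
next
  show "0 \<le> Re (A$k$k)"
    using psd_diag_nonneg[OF assms] by (simp add: less_eq_complex_def)
qed

section \<open>Rank-one decomposition\<close>

text \<open>One Cholesky step: \<open>A - u u\<^sup>*\<close> with \<open>u = A e\<^sub>k / sqrt A\<^sub>k\<^sub>k\<close> is the Schur complement that
  clears row and column \<open>k\<close>. If \<open>A\<^sub>k\<^sub>k = 0\<close>, division by zero makes \<open>u = 0\<close>; then row \<open>k\<close>
  of \<open>A\<close> already vanishes by Cauchy-Schwarz.\<close>

definition pivot :: "complex^'n^'n \<Rightarrow> 'n \<Rightarrow> complex^'n" where
  "pivot A k = (\<chi> i. A$i$k / of_real (sqrt (Re (A$k$k))))"

lemma outer_pivot_zero_diag: "Re (A$k$k) = 0 \<Longrightarrow> outer (pivot A k) (pivot A k) = 0"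
  by (simp add: pivot_def outer_def vec_eq_iff)

lemma psd_sub_outer_pivot:
  assumes A: "psd A"
  shows "psd (A - outer (pivot A k) (pivot A k))"
proof (cases "Re (A$k$k) = 0")
  case True
  then show ?thesis using A by (simp add: outer_pivot_zero_diag)
next
  case False
  define d where "d = Re (A$k$k)"
  have "0 < d" using False psd_diag_nonneg[OF A, of k] by (simp add: d_def less_eq_complex_def)
  show ?thesis unfolding psd_iff_sesq_nonneg
  proof
    fix v
    define z where "z = (A *v v)$k"
    have "(\<Sum>j\<in>UNIV. cnj (pivot A k $ j) * v$j) = z / of_real (sqrt d)"
      by (simp add: pivot_def z_def d_def psd_cnj_entry[OF A] matrix_vector_mult_def sum_divide_distrib)
    then have "sesq (outer (pivot A k) (pivot A k)) v v = of_real ((cmod z)\<^sup>2 / d)"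
      using \<open>0 < d\<close> by (simp add: sesq_outer cnj_mult_self norm_divide power_divide flip: of_real_mult)
    moreover have "(cmod z)\<^sup>2 / d \<le> Re (sesq A v v)"
      using psd_cauchy_schwarz[OF A, of v k] \<open>0 < d\<close> by (simp add: z_def d_def pos_divide_le_eq mult.commute)
    moreover have "Im (sesq A v v) = 0"
      using psd_sesq_nonneg[OF A, of v] by (simp add: less_eq_complex_def)
    ultimately show "0 \<le> sesq (A - outer (pivot A k) (pivot A k)) v v"
      by (simp add: sesq_diff less_eq_complex_def)
  qed
qed

lemma pivot_row_cancel:
  assumes A: "psd A"
  shows "(A - outer (pivot A k) (pivot A k))$k = 0"
proof (cases "Re (A$k$k) = 0")
  case True
  have "A$k$j = 0" for j
    using psd_cauchy_schwarz[OF A, of "axis j 1" k] True by (simp add: matrix_vector_mult_axis_nth)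
  then show ?thesis using True by (simp add: outer_pivot_zero_diag vec_eq_iff)
next
  case False
  then have "0 < Re (A$k$k)" using psd_diag_nonneg[OF A, of k] by (simp add: less_eq_complex_def)
  then have "A$k$k * cnj (A$j$k) / (of_real (sqrt (Re (A$k$k))) * of_real (sqrt (Re (A$k$k)))) = A$k$j" for j
    by (subst psd_diag_real[OF A]) (simp add: psd_cnj_entry[OF A] flip: of_real_mult)
  then show ?thesis by (simp add: outer_def pivot_def vec_eq_iff)
qed

lemma psd_decomposition_on:
  assumes "finite S"
  shows "psd A \<Longrightarrow> (\<And>i. i \<notin> S \<Longrightarrow> A$i = 0) \<Longrightarrow> \<exists>v. A = (\<Sum>l\<in>S. outer (v l) (v l))"
  using assms
proof (induction S arbitrary: A rule: finite_induct)
  case empty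
  then show ?case by (simp add: vec_eq_iff)
next
  case (insert k S)
  define u where "u = pivot A k"
  have "(A - outer u u)$i = 0" if "i \<notin> S" for i
  proof (cases "i = k")
    case True
    then show ?thesis using pivot_row_cancel[OF insert.prems(1)] by (simp add: u_def)
  next
    case False
    with that insert.prems(2) have "A$i = 0" by simp
    then show ?thesis by (simp add: u_def pivot_def outer_def vec_eq_iff)
  qed
  then obtain v where v: "A - outer u u = (\<Sum>l\<in>S. outer (v l) (v l))"
    using insert.IH psd_sub_outer_pivot[OF insert.prems(1)] u_def by blast
  have "(\<Sum>l\<in>S. outer (v l) (v l)) = (\<Sum>l\<in>S. outer ((v(k := u)) l) ((v(k := u)) l))"
    using insert.hyps(2) by (intro sum.cong) auto
  with v have "A = outer u u + (\<Sum>l\<in>S. outer ((v(k := u)) l) ((v(k := u)) l))"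
    by (metis add.commute diff_add_cancel)
  then have "A = (\<Sum>l\<in>insert k S. outer ((v(k := u)) l) ((v(k := u)) l))"
    using insert.hyps by simp
  then show ?case by blast
qed

lemma psd_rank_one_decomposition:
  fixes A :: "complex^'n^'n"
  shows "psd A \<Longrightarrow> \<exists>v :: 'n \<Rightarrow> complex^'n. A = (\<Sum>l\<in>UNIV. outer (v l) (v l))"
  using psd_decomposition_on[of UNIV A] by simp

lemma trace_mult_psd_nonneg:
  fixes A B :: "complex^'n^'n"
  assumes "psd A" and "psd B"
  shows "0 \<le> mtrace (A ** B)"
proof -
  obtain v :: "'n \<Rightarrow> complex^'n" where "A = (\<Sum>l\<in>UNIV. outer (v l) (v l))"
    using psd_rank_one_decomposition[OF assms(1)] by blast
  then have "mtrace (A ** B) = (\<Sum>l\<in>UNIV. sesq B (v l) (v l))"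
    by (simp add: trace_sum_mult trace_mult_commute[of "outer _ _"] trace_mult_outer)
  then show ?thesis by (simp add: sum_nonneg psd_sesq_nonneg[OF assms(2)])
qed

lemma trace_mult_loewner_mono:
  "psd L \<Longrightarrow> loewner_le X Y \<Longrightarrow> Re (mtrace (X ** L)) \<le> Re (mtrace (Y ** L))"
  using trace_mult_psd_nonneg[of "Y - X" L]
  by (simp add: loewner_le_def trace_diff_mult less_eq_complex_def)

lemma density_loewner_scale_ge_one:
  assumes "density_op \<rho>" and "density_op \<gamma>" and "loewner_le \<rho> (t *\<^sub>R \<gamma>)"
  shows "1 \<le> t"
proof -
  have "0 \<le> mtrace (t *\<^sub>R \<gamma> - \<rho>)"
    using assms(3) by (simp add: loewner_le_def psd_trace_nonneg)
  also have "\<dots> = mtrace ((t *\<^sub>R \<gamma> - \<rho>) ** mat 1)"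
    by simp
  also have "\<dots> = t *\<^sub>R mtrace (\<gamma> ** mat 1) - mtrace (\<rho> ** mat 1)"
    by (simp only: trace_diff_mult trace_scaleR_mult)
  also have "\<dots> = of_real t - 1"
    using assms(1,2) by (simp add: density_op_def scaleR_conv_of_real)
  finally show ?thesis by (simp add: less_eq_complex_def)
qed

section \<open>Tensor products and the partial trace\<close>

lemma sum_UNIV_prod: "(\<Sum>p\<in>UNIV. f p) = (\<Sum>a\<in>UNIV. \<Sum>b\<in>UNIV. f (a, b))"
  by (simp add: UNIV_Times_UNIV[symmetric] sum.cartesian_product del: UNIV_Times_UNIV)

definition kron_vec :: "complex^'a \<Rightarrow> complex^'b \<Rightarrow> complex^('a \<times> 'b)" where
  "kron_vec u w = (\<chi> p. u$fst p * w$snd p)"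

lemma kron_outer: "kron (outer u u') (outer w w') = outer (kron_vec u w) (kron_vec u' w')"
  by (simp add: kron_def outer_def kron_vec_def vec_eq_iff mult_ac)

lemma kron_sum_left: "kron (\<Sum>k\<in>S. X k) Y = (\<Sum>k\<in>S. kron (X k) Y)"
  by (simp add: kron_def vec_eq_iff sum_distrib_right)

lemma kron_sum_right: "kron X (\<Sum>k\<in>S. Y k) = (\<Sum>k\<in>S. kron X (Y k))"
  by (simp add: kron_def vec_eq_iff sum_distrib_left)

lemma kron_diff_right: "kron X (Y - Z) = kron X Y - kron X Z"
  by (simp add: kron_def vec_eq_iff right_diff_distrib)

lemma kron_scaleR_right: "kron X (t *\<^sub>R Y) = t *\<^sub>R kron X Y"
  by (simp add: kron_def vec_eq_iff)

lemma trace_kron: "mtrace (kron X Y) = mtrace X * mtrace Y"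
  by (simp add: mtrace_def kron_def sum_UNIV_prod sum_product)

lemma psd_kron:
  fixes X :: "complex^'a^'a" and Y :: "complex^'b^'b"
  assumes "psd X" and "psd Y"
  shows "psd (kron X Y)"
proof -
  obtain x :: "'a \<Rightarrow> complex^'a" where x: "X = (\<Sum>k\<in>UNIV. outer (x k) (x k))"
    using psd_rank_one_decomposition[OF assms(1)] by blast
  obtain y :: "'b \<Rightarrow> complex^'b" where y: "Y = (\<Sum>l\<in>UNIV. outer (y l) (y l))"
    using psd_rank_one_decomposition[OF assms(2)] by blast
  have "kron X Y = (\<Sum>l\<in>UNIV. \<Sum>k\<in>UNIV. outer (kron_vec (x k) (y l)) (kron_vec (x k) (y l)))"
    by (simp add: x y kron_sum_left kron_sum_right kron_outer)
  then show ?thesis by (simp add: psd_sum psd_outer)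
qed

lemma kron_loewner_mono_right: "psd X \<Longrightarrow> loewner_le Y Z \<Longrightarrow> loewner_le (kron X Y) (kron X Z)"
  by (simp add: loewner_le_def kron_diff_right[symmetric] psd_kron)

text \<open>\<open>ptrace R L = Tr\<^sub>B[L (I \<otimes> R)]\<close>, the adjoint of \<open>X \<mapsto> X \<otimes> R\<close> for the trace
  pairing.\<close>

definition ptrace :: "complex^'b^'b \<Rightarrow> complex^('a \<times> 'b)^('a \<times> 'b) \<Rightarrow> complex^'a^'a" where
  "ptrace R L = (\<chi> a a'. \<Sum>b\<in>UNIV. \<Sum>b'\<in>UNIV. R$b'$b * L$(a,b)$(a',b'))"

lemma trace_ptrace_mult: "mtrace (ptrace R L ** X) = mtrace (L ** kron X R)"
proof -
  have "mtrace (ptrace R L ** X)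
      = (\<Sum>a\<in>UNIV. \<Sum>a'\<in>UNIV. \<Sum>b\<in>UNIV. \<Sum>b'\<in>UNIV. L$(a,b)$(a',b') * (X$a'$a * R$b'$b))"
    unfolding mtrace_def matrix_matrix_mult_def ptrace_def
    by (simp add: sum_distrib_right sum_distrib_left mult_ac)
  also have "\<dots> = (\<Sum>a\<in>UNIV. \<Sum>b\<in>UNIV. \<Sum>a'\<in>UNIV. \<Sum>b'\<in>UNIV. L$(a,b)$(a',b') * (X$a'$a * R$b'$b))"
    by (rule sum.cong[OF refl], rule sum.swap)
  also have "\<dots> = mtrace (L ** kron X R)"
    unfolding mtrace_def matrix_matrix_mult_def kron_def by (simp add: sum_UNIV_prod)
  finally show ?thesis .
qed

lemma psd_ptrace:
  assumes "psd R" and "psd L"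
  shows "psd (ptrace R L)"
  unfolding psd_iff_sesq_nonneg
proof
  fix v
  have "sesq (ptrace R L) v v = mtrace (L ** kron (outer v v) R)"
    by (simp add: trace_mult_outer[symmetric] trace_ptrace_mult)
  then show "0 \<le> sesq (ptrace R L) v v"
    using trace_mult_psd_nonneg[OF assms(2) psd_kron[OF psd_outer assms(1)]] by simp
qed

lemma ptrace_diff: "ptrace R (L - L') = ptrace R L - ptrace R L'"
  by (simp add: ptrace_def vec_eq_iff algebra_simps sum_subtractf)

lemma ptrace_mat1:
  fixes R :: "complex^'b::finite^'b"
  assumes "mtrace R = 1"
  shows "ptrace R (mat 1 :: complex^('a::finite \<times> 'b)^('a \<times> 'b)) = mat 1"
proof -
  have "(\<Sum>b\<in>UNIV. \<Sum>b'\<in>UNIV. R$b'$b * (mat 1 :: complex^('a \<times> 'b)^('a \<times> 'b))$(a,b)$(a',b'))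
      = (if a = a' then mtrace R else 0)" for a a' :: 'a
    by (simp add: mat_def mtrace_def if_distrib if_distribR cong: if_cong)
  then show ?thesis using assms by (simp add: ptrace_def vec_eq_iff mat_def)
qed

section \<open>Hypothesis testing\<close>

lemma le_mult_cInf:
  fixes S :: "real set"
  assumes "S \<noteq> {}" and "bdd_below S" and le: "\<And>x. x \<in> S \<Longrightarrow> a \<le> c * x"
  shows "a \<le> c * Inf S"
proof (cases "0 < c")
  case True
  then have "a / c \<le> Inf S"
    using assms(1) le by (intro cInf_greatest) (auto simp: pos_divide_le_eq mult.commute)
  with True show ?thesis by (simp add: pos_divide_le_eq mult.commute)
next
  case False
  obtain x where "x \<in> S" using assms(1) by blast
  with assms(2) False have "c * x \<le> c * Inf S"
    by (intro mult_left_mono_neg cInf_lower) auto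
  with le[OF \<open>x \<in> S\<close>] show ?thesis by simp
qed

lemma neg_log2e_le_add:
  assumes "0 < T" and "a \<le> T * b"
  shows "- log2e b \<le> - log2e a + log2e T"
proof (cases "a \<le> 0")
  case True
  then show ?thesis using assms(1) by (simp add: log2e_def)
next
  case False
  with assms have "0 < b" by (meson less_le_trans not_le zero_less_mult_pos)
  with False assms have "log 2 a \<le> log 2 (T * b)"
    by simp
  also have "\<dots> = log 2 T + log 2 b"
    using assms(1) \<open>0 < b\<close> by (simp add: log_mult)
  finally have "log 2 a \<le> log 2 T + log 2 b" .
  with False \<open>0 < b\<close> assms(1) show ?thesis by (simp add: log2e_def)
qed

definition tests :: "real \<Rightarrow> complex^'n^'n \<Rightarrow> (complex^'n^'n) set" where
  "tests \<epsilon> \<rho> = {\<Lambda>. psd \<Lambda> \<and> loewner_le \<Lambda> (mat 1) \<and> 1 - \<epsilon> \<le> Re (mtrace (\<Lambda> ** \<rho>))}"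

definition min_type2_error :: "real \<Rightarrow> complex^'n^'n \<Rightarrow> complex^'n^'n \<Rightarrow> real" where
  "min_type2_error \<epsilon> \<rho> \<gamma> = Inf ((\<lambda>\<Lambda>. Re (mtrace (\<gamma> ** \<Lambda>))) ` tests \<epsilon> \<rho>)"

lemma D_min_eq_min_type2_error: "D_min \<epsilon> \<rho> \<gamma> = - log2e (min_type2_error \<epsilon> \<rho> \<gamma>)"
  unfolding D_min_def min_type2_error_def tests_def
  by (rule arg_cong[where f = "\<lambda>S. - log2e (Inf S)"]) auto

lemma mat1_in_tests: "0 \<le> \<epsilon> \<Longrightarrow> Re (mtrace \<rho>) = 1 \<Longrightarrow> mat 1 \<in> tests \<epsilon> \<rho>"
  by (simp add: tests_def loewner_le_def psd_mat1 psd_zero)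

lemma bdd_below_type2_errors: "psd \<gamma> \<Longrightarrow> bdd_below ((\<lambda>\<Lambda>. Re (mtrace (\<gamma> ** \<Lambda>))) ` tests \<epsilon> \<rho>)"
  by (rule bdd_belowI2[of _ 0])
     (use trace_mult_psd_nonneg in \<open>auto simp: tests_def less_eq_complex_def\<close>)

lemma min_type2_error_le: "psd \<gamma> \<Longrightarrow> \<Lambda> \<in> tests \<epsilon> \<rho> \<Longrightarrow> min_type2_error \<epsilon> \<rho> \<gamma> \<le> Re (mtrace (\<gamma> ** \<Lambda>))"
  unfolding min_type2_error_def by (rule cInf_lower) (auto simp: bdd_below_type2_errors)

lemma ptrace_in_tests:
  assumes "density_op \<rho>'" and "\<Lambda> \<in> tests \<epsilon> (kron \<rho> \<rho>')"
  shows "ptrace \<rho>' \<Lambda> \<in> tests \<epsilon> \<rho>"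
proof -
  have "psd \<rho>'" and "mtrace \<rho>' = 1" using assms(1) by (simp_all add: density_op_def)
  moreover have "psd \<Lambda>" and "psd (mat 1 - \<Lambda>)" and "1 - \<epsilon> \<le> Re (mtrace (\<Lambda> ** kron \<rho> \<rho>'))"
    using assms(2) by (simp_all add: tests_def loewner_le_def)
  moreover have "mat 1 - ptrace \<rho>' \<Lambda> = ptrace \<rho>' (mat 1 - \<Lambda>)"
    using \<open>mtrace \<rho>' = 1\<close> by (simp add: ptrace_diff ptrace_mat1)
  ultimately show ?thesis
    by (simp add: tests_def loewner_le_def psd_ptrace trace_ptrace_mult)
qed

lemma min_type2_error_kron_le:
  assumes "0 \<le> \<epsilon>" and "density_op \<rho>" and "psd \<gamma>" and "density_op \<rho>'" and "psd \<gamma>'"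
    and "loewner_le \<rho>' (t *\<^sub>R \<gamma>')"
  shows "min_type2_error \<epsilon> \<rho> \<gamma> \<le> t * min_type2_error \<epsilon> (kron \<rho> \<rho>') (kron \<gamma> \<gamma>')"
  unfolding min_type2_error_def[of _ "kron \<rho> \<rho>'"]
proof (rule le_mult_cInf)
  have "Re (mtrace (kron \<rho> \<rho>')) = 1"
    using assms(2,4) by (simp add: density_op_def trace_kron)
  then show "(\<lambda>\<Lambda>. Re (mtrace (kron \<gamma> \<gamma>' ** \<Lambda>))) ` tests \<epsilon> (kron \<rho> \<rho>') \<noteq> {}"
    using mat1_in_tests[OF assms(1)] by blast
  show "bdd_below ((\<lambda>\<Lambda>. Re (mtrace (kron \<gamma> \<gamma>' ** \<Lambda>))) ` tests \<epsilon> (kron \<rho> \<rho>'))"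
    using assms(3,5) by (simp add: bdd_below_type2_errors psd_kron)
next
  fix x assume "x \<in> (\<lambda>\<Lambda>. Re (mtrace (kron \<gamma> \<gamma>' ** \<Lambda>))) ` tests \<epsilon> (kron \<rho> \<rho>')"
  then obtain \<Lambda> where \<Lambda>: "\<Lambda> \<in> tests \<epsilon> (kron \<rho> \<rho>')" and x: "x = Re (mtrace (kron \<gamma> \<gamma>' ** \<Lambda>))"
    by blast
  have "min_type2_error \<epsilon> \<rho> \<gamma> \<le> Re (mtrace (\<gamma> ** ptrace \<rho>' \<Lambda>))"
    using min_type2_error_le[OF assms(3) ptrace_in_tests[OF assms(4) \<Lambda>]] .
  also have "\<dots> = Re (mtrace (kron \<gamma> \<rho>' ** \<Lambda>))"
    by (simp add: trace_mult_commute[of \<gamma>] trace_ptrace_mult trace_mult_commute[of \<Lambda>])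
  also have "\<dots> \<le> Re (mtrace ((t *\<^sub>R kron \<gamma> \<gamma>') ** \<Lambda>))"
    using \<Lambda> kron_loewner_mono_right[OF assms(3,6)]
    by (intro trace_mult_loewner_mono) (simp_all add: tests_def kron_scaleR_right)
  also have "\<dots> = t * x"
    by (simp add: x trace_scaleR_mult)
  finally show "min_type2_error \<epsilon> \<rho> \<gamma> \<le> t * x" .
qed

theorem lemma3:
  fixes \<epsilon> :: real
    and \<rho> \<gamma> :: "complex^'a::finite^'a"
    and \<rho>' \<gamma>' :: "complex^'b::finite^'b"
  assumes "\<epsilon> > 0"
    and "density_op \<rho>" and "density_op \<gamma>"
    and "density_op \<rho>'" and "density_op \<gamma>'"
  shows "D_min \<epsilon> (kron \<rho> \<rho>') (kron \<gamma> \<gamma>') \<le> D_min \<epsilon> \<rho> \<gamma> + D_max \<rho>' \<gamma>'"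
proof (cases "\<exists>t\<ge>0. loewner_le \<rho>' (t *\<^sub>R \<gamma>')")
  case False
  then have "D_max \<rho>' \<gamma>' = \<infinity>" unfolding D_max_def by (rule if_not_P)
  then show ?thesis by (simp add: D_min_eq_min_type2_error log2e_def)
next
  case True
  define scalings where "scalings = {t. t \<ge> 0 \<and> loewner_le \<rho>' (t *\<^sub>R \<gamma>')}"
  have "scalings \<noteq> {}" and ge_one: "\<And>t. t \<in> scalings \<Longrightarrow> 1 \<le> t"
    using True assms(4,5) density_loewner_scale_ge_one by (auto simp: scalings_def)
  then have "0 < Inf scalings"
    using cInf_greatest[of scalings 1] by fastforce
  have "min_type2_error \<epsilon> \<rho> \<gamma> \<le> min_type2_error \<epsilon> (kron \<rho> \<rho>') (kron \<gamma> \<gamma>') * Inf scalings"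
  proof (rule le_mult_cInf)
    show "bdd_below scalings" using ge_one by (rule bdd_belowI)
    show "min_type2_error \<epsilon> \<rho> \<gamma> \<le> min_type2_error \<epsilon> (kron \<rho> \<rho>') (kron \<gamma> \<gamma>') * t"
      if "t \<in> scalings" for t
      using that assms min_type2_error_kron_le[of \<epsilon> \<rho> \<gamma> \<rho>' \<gamma>' t]
      by (simp add: scalings_def density_op_def mult.commute)
  qed fact
  then show ?thesis
    using True \<open>0 < Inf scalings\<close> neg_log2e_le_add
    by (simp add: D_min_eq_min_type2_error D_max_def scalings_def mult.commute)
qed

end
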